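(* Let $X$ be a Lorentzian pre-length space with timelike curvature bounded above by $0$ globally. Then $X$ is Ptolemaic, i.e. for all $x\le y\le z\le w$ in $X$, $$\ell(x,z)\,\ell(y,w)\ \ge\ \ell(x,y)\,\ell(z,w)+\ell(x,w)\,\ell(y,z).$$
   Context: A Lorentzian pre-length space $(X,d,\ll,\le,\ell)$: $(X,d)$ a metric space, $\le$ reflexive and transitive, $\ll$ transitive and contained in $\le$, $\ell:X\times X\to[0,\infty]$ with $\ell(x,z)\ge\ell(x,y)+\ell(y,z)$ whenever $x\le y\le z$, and $\ell(x,y)>0$ iff $x\ll y$. Maximising geodesic from $x\le y$: a curve $\gamma$ from $x$ to $y$, monotone for $\le$, with $\ell(\gamma(s),\gamma(u))=\ell(\gamma(s),\gamma(t))+\ell(\gamma(t),\gamma(u))$ for $s\le t\le u$. Timelike curvature bounded above by $0$ globally: (i) $\ell$ is finite and continuous on $X\times X$; (ii) any $x\ll y$ are joined by a maximising geodesic; (iii) for every timelike triangle $\Delta(x,y,z)$ ($x\ll y\ll z$ with maximising geodesics as sides) and any points $p,q$ on its sides, $\ell(p,q)\ge\ell(\bar p,\bar q)$, where $\bar p,\bar q$ are the corresponding points (same $\ell$-distances from the endpoints of their side) on a triangle in the Minkowski plane $\mathbb R^{1,1}$ with the same side lengths. *)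

theory Defs
  imports "HOL-Analysis.Analysis"
begin

text \<open>A Lorentzian pre-length space on the metric space given by the type 'a
  (the metric d is dist): causal relation le, timelike relation ll,
  time separation function lt with values in [0,\<infinity>].\<close>

definition lorentzian_pre_length_space ::
  "('a::metric_space \<Rightarrow> 'a \<Rightarrow> bool) \<Rightarrow> ('a \<Rightarrow> 'a \<Rightarrow> bool) \<Rightarrow> ('a \<Rightarrow> 'a \<Rightarrow> ennreal) \<Rightarrow> bool" where
  "lorentzian_pre_length_space le ll lt \<longleftrightarrow>
     (\<forall>x. le x x) \<and>
     (\<forall>x y z. le x y \<longrightarrow> le y z \<longrightarrow> le x z) \<and>
     (\<forall>x y z. ll x y \<longrightarrow> ll y z \<longrightarrow> ll x z) \<and>
     (\<forall>x y. ll x y \<longrightarrow> le x y) \<and>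
     (\<forall>x y z. le x y \<longrightarrow> le y z \<longrightarrow> lt x y + lt y z \<le> lt x z) \<and>
     (\<forall>x y. 0 < lt x y \<longleftrightarrow> ll x y)"

definition max_geodesic ::
  "('a::metric_space \<Rightarrow> 'a \<Rightarrow> bool) \<Rightarrow> ('a \<Rightarrow> 'a \<Rightarrow> ennreal) \<Rightarrow> (real \<Rightarrow> 'a) \<Rightarrow> 'a \<Rightarrow> 'a \<Rightarrow> bool" where
  "max_geodesic le lt \<gamma> x y \<longleftrightarrow>
     le x y \<and> continuous_on {0..1} \<gamma> \<and> \<gamma> 0 = x \<and> \<gamma> 1 = y \<and>
     (\<forall>s t. 0 \<le> s \<longrightarrow> s \<le> t \<longrightarrow> t \<le> 1 \<longrightarrow> le (\<gamma> s) (\<gamma> t)) \<and>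
     (\<forall>s t u. 0 \<le> s \<longrightarrow> s \<le> t \<longrightarrow> t \<le> u \<longrightarrow> u \<le> 1 \<longrightarrow>
        lt (\<gamma> s) (\<gamma> u) = lt (\<gamma> s) (\<gamma> t) + lt (\<gamma> t) (\<gamma> u))"

definition mink_tau :: "real \<times> real \<Rightarrow> real \<times> real \<Rightarrow> real" where
  "mink_tau p q = (let dt = fst q - fst p; ds = snd q - snd p in
     if \<bar>ds\<bar> \<le> dt then sqrt (dt\<^sup>2 - ds\<^sup>2) else 0)"

definition corr_point ::
  "('a \<Rightarrow> 'a \<Rightarrow> ennreal) \<Rightarrow> 'a \<Rightarrow> 'a \<Rightarrow> (real \<Rightarrow> 'a) \<Rightarrow> real \<times> real \<Rightarrow> real \<times> real
     \<Rightarrow> 'a \<Rightarrow> real \<times> real \<Rightarrow> bool" where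
  "corr_point lt a b \<sigma> ab bb p pb \<longleftrightarrow>
     p \<in> \<sigma> ` {0..1} \<and> pb \<in> closed_segment ab bb \<and>
     ennreal (mink_tau ab pb) = lt a p \<and> ennreal (mink_tau pb bb) = lt p b"

definition timelike_triangle ::
  "('a::metric_space \<Rightarrow> 'a \<Rightarrow> bool) \<Rightarrow> ('a \<Rightarrow> 'a \<Rightarrow> bool) \<Rightarrow> ('a \<Rightarrow> 'a \<Rightarrow> ennreal)
    \<Rightarrow> 'a \<Rightarrow> 'a \<Rightarrow> 'a \<Rightarrow> (real \<Rightarrow> 'a) \<Rightarrow> (real \<Rightarrow> 'a) \<Rightarrow> (real \<Rightarrow> 'a) \<Rightarrow> bool" where
  "timelike_triangle le ll lt x y z \<alpha> \<beta> \<gamma> \<longleftrightarrow>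
     ll x y \<and> ll y z \<and>
     max_geodesic le lt \<alpha> x y \<and> max_geodesic le lt \<beta> y z \<and> max_geodesic le lt \<gamma> x z"

definition tl_curv_bounded_above_0 ::
  "('a::metric_space \<Rightarrow> 'a \<Rightarrow> bool) \<Rightarrow> ('a \<Rightarrow> 'a \<Rightarrow> bool) \<Rightarrow> ('a \<Rightarrow> 'a \<Rightarrow> ennreal) \<Rightarrow> bool" where
  "tl_curv_bounded_above_0 le ll lt \<longleftrightarrow>
     (\<forall>x y. lt x y \<noteq> \<infinity>) \<and>
     continuous_on UNIV (\<lambda>q. lt (fst q) (snd q)) \<and>
     (\<forall>x y. ll x y \<longrightarrow> (\<exists>\<gamma>. max_geodesic le lt \<gamma> x y)) \<and>
     (\<forall>x y z \<alpha> \<beta> \<gamma> xb yb zb.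
        timelike_triangle le ll lt x y z \<alpha> \<beta> \<gamma> \<longrightarrow>
        ennreal (mink_tau xb yb) = lt x y \<longrightarrow>
        ennreal (mink_tau yb zb) = lt y z \<longrightarrow>
        ennreal (mink_tau xb zb) = lt x z \<longrightarrow>
        (let S = {(p, pb). corr_point lt x y \<alpha> xb yb p pb \<or>
                           corr_point lt y z \<beta> yb zb p pb \<or>
                           corr_point lt x z \<gamma> xb zb p pb}
         in \<forall>(p, pb)\<in>S. \<forall>(q, qb)\<in>S. ennreal (mink_tau pb qb) \<le> lt p q))"

end

theory Submission
  imports Defs
begin

text \<open>For \<open>x \<ll> y \<ll> z \<ll> w\<close>, draw comparison triangles of \<open>\<Delta>(x,y,z)\<close> and \<open>\<Delta>(x,z,w)\<close> in the
  Minkowski plane on the two sides of their common side, with vertices \<open>x', y', z', w'\<close>. In null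
  coordinates \<open>(t + s, t - s)\<close> take \<open>x' = 0\<close> and \<open>z' = (L,L)\<close>; then the time separation of two
  points is the square root of the product of their coordinate differences. For every point \<open>p\<close> of
  the side \<open>xz\<close>, curvature comparison in both triangles and the reverse triangle inequality give
  \<open>\<tau>(y,w) \<ge> \<tau>(y,p) + \<tau>(p,w) \<ge> \<tau>(y',p') + \<tau>(p',w')\<close>. If the segment \<open>y'w'\<close> meets the side \<open>x'z'\<close>,
  this yields \<open>\<tau>(y,w) \<ge> \<tau>(y',w')\<close>, and the claim follows from the Ptolemy inequality of the
  Minkowski plane, which in null coordinates is the Cauchy-Schwarz inequality. Otherwise the choice
  \<open>p = z\<close> together with \<open>\<tau>(x,w) \<ge> \<tau>(x,y) + \<tau>(y,w)\<close> suffices. The merely causal case follows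
  by replacing \<open>y\<close> and \<open>z\<close> with points at distance \<open>\<epsilon>\<close> from the ends of a geodesic from \<open>y\<close>
  to \<open>z\<close> and letting \<open>\<epsilon>\<close> tend to \<open>0\<close>.\<close>

lemma real_le_linear_epsilon:
  fixes A B K c :: real
  assumes "0 < c" and le: "\<And>e. 0 < e \<Longrightarrow> e < c \<Longrightarrow> A \<le> B + K * e"
  shows "A \<le> B"
proof (rule tendsto_lowerbound)
  show "((\<lambda>e. B + K * e) \<longlongrightarrow> B) (at_right 0)"
    by (auto intro!: tendsto_eq_intros)
  show "\<forall>\<^sub>F e in at_right 0. A \<le> B + K * e"
    using eventually_at_right_real[OF \<open>0 < c\<close>] by eventually_elim (use le in auto)
qed simp

section \<open>The Minkowski plane in null coordinates\<close>

definition from_null_coords :: "real \<Rightarrow> real \<Rightarrow> real \<times> real" where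
  "from_null_coords u v = ((u + v) / 2, (u - v) / 2)"

lemma mink_tau_from_null_coords:
  "mink_tau (from_null_coords u v) (from_null_coords u' v') =
     (if u \<le> u' \<and> v \<le> v' then sqrt ((u' - u) * (v' - v)) else 0)"
proof -
  have "((u' + v') / 2 - (u + v) / 2)\<^sup>2 - ((u' - v') / 2 - (u - v) / 2)\<^sup>2 = (u' - u) * (v' - v)"
    by (simp add: power2_eq_square field_simps)
  moreover have "\<bar>(u' - v') / 2 - (u - v) / 2\<bar> \<le> (u' + v') / 2 - (u + v) / 2 \<longleftrightarrow> u \<le> u' \<and> v \<le> v'"
    by (auto simp: abs_le_iff field_simps)
  ultimately show ?thesis by (simp add: mink_tau_def from_null_coords_def Let_def)
qed

lemma mink_tau_self: "mink_tau p p = 0"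
  by (simp add: mink_tau_def Let_def)

lemma from_null_coords_diagonal_in_segment:
  assumes "0 \<le> s" "s \<le> L"
  shows "from_null_coords s s \<in> closed_segment (from_null_coords 0 0) (from_null_coords L L)"
proof (cases "L = 0")
  case True
  thus ?thesis using assms by simp
next
  case False
  hence "from_null_coords s s = (1 - s / L) *\<^sub>R from_null_coords 0 0 + (s / L) *\<^sub>R from_null_coords L L"
    by (simp add: from_null_coords_def)
  moreover have "0 \<le> s / L" "s / L \<le> 1" using assms by (auto simp: divide_le_eq_1)
  ultimately show ?thesis unfolding closed_segment_def by blast
qed

lemma exists_sum_prod:
  fixes S P :: real
  assumes "4 * P \<le> S\<^sup>2"
  shows "\<exists>u v. v \<le> u \<and> u + v = S \<and> u * v = P"
proof -
  define r where "r = sqrt (S\<^sup>2 - 4 * P)"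
  have "0 \<le> r" "r\<^sup>2 = S\<^sup>2 - 4 * P" using assms by (simp_all add: r_def)
  hence "(S - r) / 2 \<le> (S + r) / 2 \<and> (S + r) / 2 + (S - r) / 2 = S \<and> (S + r) / 2 * ((S - r) / 2) = P"
    by (simp add: field_simps power2_eq_square)
  thus ?thesis by blast
qed

lemma pos_of_mult_pos_add_pos:
  fixes x y :: real
  assumes "0 < x * y" "0 < x + y"
  shows "0 < x \<and> 0 < y"
  using assms by (auto simp: zero_less_mult_iff)

lemma comparison_vertex_between:
  fixes a b L :: real
  assumes "0 < a" "0 < b" "a + b \<le> L"
  shows "\<exists>u v. 0 \<le> v \<and> v \<le> u \<and> u < L \<and> u * v = a\<^sup>2 \<and> (L - u) * (L - v) = b\<^sup>2"
proof -
  define S where "S = (L\<^sup>2 + a\<^sup>2 - b\<^sup>2) / L"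
  have "0 < L" using assms by simp
  hence LS: "L * S = L\<^sup>2 + a\<^sup>2 - b\<^sup>2" by (simp add: S_def)
  have "b\<^sup>2 \<le> (L - a)\<^sup>2" using assms by (intro power_mono) auto
  hence "L * (2 * a) \<le> L * S" unfolding LS by (simp add: power2_eq_square algebra_simps)
  hence "2 * a \<le> S" using \<open>0 < L\<close> by simp
  hence "(2 * a)\<^sup>2 \<le> S\<^sup>2" using assms by (intro power_mono) auto
  then obtain u v where uv: "v \<le> u" "u + v = S" "u * v = a\<^sup>2"
    using exists_sum_prod[of "a\<^sup>2" S] by (auto simp: power2_eq_square)
  have "(L - u) * (L - v) = L\<^sup>2 - L * (u + v) + u * v" by (simp add: power2_eq_square algebra_simps)
  hence prod: "(L - u) * (L - v) = b\<^sup>2" using uv LS by simp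
  have "0 < v" using pos_of_mult_pos_add_pos[of u v] uv \<open>2 * a \<le> S\<close> assms by simp
  moreover have "0 < L - u"
  proof -
    have "a\<^sup>2 < L\<^sup>2" using assms by (intro power_strict_mono) auto
    have "L * ((L - u) + (L - v)) = 2 * L\<^sup>2 - L * (u + v)"
      by (simp add: power2_eq_square algebra_simps)
    hence "L * ((L - u) + (L - v)) = L\<^sup>2 - a\<^sup>2 + b\<^sup>2" using uv LS by simp
    hence "0 < L * ((L - u) + (L - v))" using \<open>a\<^sup>2 < L\<^sup>2\<close> zero_le_power2[of b] by linarith
    hence "0 < (L - u) + (L - v)" using \<open>0 < L\<close> by (simp add: zero_less_mult_iff)
    thus ?thesis using pos_of_mult_pos_add_pos[of "L - u" "L - v"] prod assms by simp
  qed
  ultimately show ?thesis using uv prod by (intro exI[of _ u] exI[of _ v]) auto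
qed

lemma comparison_vertex_beyond:
  fixes d e L :: real
  assumes "0 < d" "0 < L" "L + d \<le> e"
  shows "\<exists>u v. L \<le> u \<and> u \<le> v \<and> u * v = e\<^sup>2 \<and> (u - L) * (v - L) = d\<^sup>2"
proof -
  define S where "S = (e\<^sup>2 + L\<^sup>2 - d\<^sup>2) / L"
  have LS: "L * S = e\<^sup>2 + L\<^sup>2 - d\<^sup>2" using assms by (simp add: S_def)
  have "d\<^sup>2 \<le> (e - L)\<^sup>2" using assms by (intro power_mono) auto
  hence "L * (2 * e) \<le> L * S" unfolding LS by (simp add: power2_eq_square algebra_simps)
  hence "2 * e \<le> S" using assms by simp
  hence "(2 * e)\<^sup>2 \<le> S\<^sup>2" using assms by (intro power_mono) auto
  then obtain u v where uv: "u \<le> v" "v + u = S" "v * u = e\<^sup>2"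
    using exists_sum_prod[of "e\<^sup>2" S] by (auto simp: power2_eq_square)
  have "(u - L) * (v - L) = L\<^sup>2 - L * (v + u) + v * u" by (simp add: power2_eq_square algebra_simps)
  hence prod: "(u - L) * (v - L) = d\<^sup>2" using uv LS by simp
  have "(L + d)\<^sup>2 \<le> e\<^sup>2" using assms by (intro power_mono) auto
  moreover have "L * ((u - L) + (v - L)) = L * (v + u) - 2 * L\<^sup>2"
    by (simp add: power2_eq_square algebra_simps)
  moreover have "0 < L * d" using assms by simp
  ultimately have "0 < L * ((u - L) + (v - L))"
    using uv LS by (simp add: power2_eq_square algebra_simps)
  hence "0 < (u - L) + (v - L)" using assms by (simp add: zero_less_mult_iff)
  hence "0 < u - L" using pos_of_mult_pos_add_pos[of "u - L" "v - L"] prod assms by simp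
  thus ?thesis using uv prod by (intro exI[of _ u] exI[of _ v]) (auto simp: mult.commute)
qed

lemma sqrt_mult_add_sqrt_mult_le:
  fixes X Y Z W :: real
  assumes "0 \<le> X" "0 \<le> Y" "0 \<le> Z" "0 \<le> W"
  shows "sqrt (X * Z) + sqrt (Y * W) \<le> sqrt ((X + Y) * (Z + W))"
proof (rule real_le_rsqrt)
  have "(sqrt (X * Z) + sqrt (Y * W))\<^sup>2 = X * Z + Y * W + 2 * sqrt ((X * W) * (Y * Z))"
    using assms by (simp add: power2_eq_square algebra_simps real_sqrt_mult[symmetric])
  also have "\<dots> \<le> X * Z + Y * W + (X * W + Y * Z)"
    using arith_geo_mean_sqrt[of "X * W" "Y * Z"] assms by simp
  finally show "(sqrt (X * Z) + sqrt (Y * W))\<^sup>2 \<le> (X + Y) * (Z + W)"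
    by (simp add: algebra_simps)
qed

text \<open>In the following lemmas \<open>x' = 0\<close>, \<open>y' = (u1,v1)\<close>, \<open>z' = (L,L)\<close> and \<open>w' = (u2,v2)\<close> in null
  coordinates, so every square root is a Minkowski time separation.\<close>

lemma mink_ptolemy_null_coords:
  fixes u1 v1 u2 v2 L :: real
  assumes "0 \<le> u1" "u1 \<le> L" "L \<le> u2" "0 \<le> v1" "v1 \<le> L" "L \<le> v2"
  shows "sqrt (u1 * v1) * sqrt ((u2 - L) * (v2 - L)) + sqrt (u2 * v2) * sqrt ((L - u1) * (L - v1))
           \<le> L * sqrt ((u2 - u1) * (v2 - v1))"
proof -
  define X Y Z W where "X = u1 * (u2 - L)" and "Y = (L - u1) * u2"
    and "Z = v1 * (v2 - L)" and "W = (L - v1) * v2"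
  have "sqrt (u1 * v1) * sqrt ((u2 - L) * (v2 - L)) = sqrt (X * Z)"
    unfolding X_def Z_def by (simp add: real_sqrt_mult[symmetric] algebra_simps)
  moreover have "sqrt (u2 * v2) * sqrt ((L - u1) * (L - v1)) = sqrt (Y * W)"
    unfolding Y_def W_def by (simp add: real_sqrt_mult[symmetric] algebra_simps)
  moreover have "L * sqrt ((u2 - u1) * (v2 - v1)) = sqrt ((X + Y) * (Z + W))"
  proof -
    have "(X + Y) * (Z + W) = L\<^sup>2 * ((u2 - u1) * (v2 - v1))"
      unfolding X_def Y_def Z_def W_def by (simp add: power2_eq_square algebra_simps)
    thus ?thesis using assms by (simp add: real_sqrt_mult)
  qed
  moreover have "0 \<le> X" "0 \<le> Y" "0 \<le> Z" "0 \<le> W"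
    unfolding X_def Y_def Z_def W_def using assms by auto
  ultimately show ?thesis using sqrt_mult_add_sqrt_mult_le by simp
qed

lemma segment_meets_diagonal:
  fixes u1 v1 u2 v2 L :: real
  assumes "v1 \<le> u1" "u1 \<le> L" "L \<le> u2" "u2 \<le> v2"
    and "(L - v1) * (u2 - L) \<le> (L - u1) * (v2 - L)"
  shows "\<exists>s. u1 \<le> s \<and> s \<le> L \<and>
           sqrt ((s - u1) * (s - v1)) + sqrt ((u2 - s) * (v2 - s)) = sqrt ((u2 - u1) * (v2 - v1))"
proof -
  define D where "D = (u1 - v1) + (v2 - u2)"
  define t where "t = (u1 - v1) / D"
  define s where "s = u1 + t * (u2 - u1)"
  have D: "0 \<le> D" "t * D = u1 - v1"
    using assms by (auto simp: D_def t_def)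
  have t: "0 \<le> t" "t \<le> 1"
    using assms by (auto simp: t_def D_def divide_le_eq_1 intro!: divide_nonneg_nonneg)
  have s_u: "s - u1 = t * (u2 - u1)" "u2 - s = (1 - t) * (u2 - u1)"
    by (simp_all add: s_def algebra_simps)
  have s_v: "s - v1 = t * (v2 - v1)" "v2 - s = (1 - t) * (v2 - v1)"
    using D(2) by (simp_all add: s_def D_def algebra_simps)
  have "t * (u2 - u1) \<le> L - u1"
  proof (cases "D = 0")
    case True
    thus ?thesis using assms by (simp add: t_def)
  next
    case False
    have "t * (u2 - u1) * D = (u2 - u1) * (u1 - v1)"
      using D(2) by (metis mult.assoc mult.commute)
    moreover have "(L - u1) * D - (u2 - u1) * (u1 - v1) = (L - u1) * (v2 - L) - (L - v1) * (u2 - L)"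
      by (simp add: D_def algebra_simps)
    ultimately have "t * (u2 - u1) * D \<le> (L - u1) * D"
      using assms(5) by linarith
    thus ?thesis using False D(1) by simp
  qed
  hence "s \<le> L" by (simp add: s_def)
  moreover have "u1 \<le> s" using t assms by (simp add: s_def)
  moreover have "sqrt ((s - u1) * (s - v1)) + sqrt ((u2 - s) * (v2 - s)) = sqrt ((u2 - u1) * (v2 - v1))"
  proof -
    have "sqrt ((s - u1) * (s - v1)) = t * sqrt ((u2 - u1) * (v2 - v1))"
      unfolding s_u s_v using t by (simp add: real_sqrt_mult mult.left_commute)
    moreover have "sqrt ((u2 - s) * (v2 - s)) = (1 - t) * sqrt ((u2 - u1) * (v2 - v1))"
      unfolding s_u s_v using t by (simp add: real_sqrt_mult mult.left_commute)
    ultimately show ?thesis by (simp add: algebra_simps)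
  qed
  ultimately show ?thesis by blast
qed

lemma beyond_diagonal_sqrt_mult_le:
  fixes u1 v1 u2 v2 L :: real
  assumes "v1 \<le> u1" "u1 \<le> L" "L \<le> u2" "u2 \<le> v2"
    and far: "(L - u1) * (v2 - L) \<le> (L - v1) * (u2 - L)"
  shows "sqrt ((L - u1) * (L - v1)) * ((u2 - L) + (v2 - L)) \<le> sqrt ((u2 - L) * (v2 - L)) * ((L - u1) + (L - v1))"
proof (rule power2_le_imp_le)
  have "(sqrt ((L - u1) * (L - v1)))\<^sup>2 = (L - u1) * (L - v1)"
    and "(sqrt ((u2 - L) * (v2 - L)))\<^sup>2 = (u2 - L) * (v2 - L)"
    using assms(1-4) by simp_all
  hence "(sqrt ((u2 - L) * (v2 - L)) * ((L - u1) + (L - v1)))\<^sup>2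
          - (sqrt ((L - u1) * (L - v1)) * ((u2 - L) + (v2 - L)))\<^sup>2
      = ((L - v1) * (u2 - L) - (L - u1) * (v2 - L)) * ((L - v1) * (v2 - L) - (L - u1) * (u2 - L))"
    unfolding power_mult_distrib by (simp add: power2_eq_square algebra_simps)
  moreover have "(L - u1) * (u2 - L) \<le> (L - v1) * (v2 - L)"
    using assms(1-4) by (intro mult_mono) auto
  hence "0 \<le> ((L - v1) * (u2 - L) - (L - u1) * (v2 - L)) * ((L - v1) * (v2 - L) - (L - u1) * (u2 - L))"
    using far by simp
  ultimately show "(sqrt ((L - u1) * (L - v1)) * ((u2 - L) + (v2 - L)))\<^sup>2
      \<le> (sqrt ((u2 - L) * (v2 - L)) * ((L - u1) + (L - v1)))\<^sup>2"
    by linarith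
  show "0 \<le> sqrt ((u2 - L) * (v2 - L)) * ((L - u1) + (L - v1))" using assms(1-4) by simp
qed

lemma ptolemy_null_coords_beyond_diagonal:
  fixes u1 v1 u2 v2 L :: real
  assumes "0 \<le> v1" "v1 \<le> u1" "u1 \<le> L" "0 < L" "L \<le> u2" "u2 \<le> v2"
    and far: "(L - u1) * (v2 - L) \<le> (L - v1) * (u2 - L)"
    and long: "sqrt (u1 * v1) + sqrt ((L - u1) * (L - v1)) + sqrt ((u2 - L) * (v2 - L)) \<le> sqrt (u2 * v2)"
  shows "sqrt (u1 * v1) * sqrt ((u2 - L) * (v2 - L)) + sqrt (u2 * v2) * sqrt ((L - u1) * (L - v1))
           \<le> L * (sqrt ((L - u1) * (L - v1)) + sqrt ((u2 - L) * (v2 - L)))"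
proof -
  define a b d e where "a = sqrt (u1 * v1)" and "b = sqrt ((L - u1) * (L - v1))"
    and "d = sqrt ((u2 - L) * (v2 - L))" and "e = sqrt (u2 * v2)"
  have "0 \<le> u1 * v1" "0 \<le> (L - u1) * (L - v1)" "0 \<le> (u2 - L) * (v2 - L)" "0 \<le> u2 * v2"
    using assms(1-6) by simp_all
  hence nonneg: "0 \<le> a" "0 \<le> b" "0 \<le> d" "0 \<le> e"
    and sq: "a\<^sup>2 = u1 * v1" "b\<^sup>2 = (L - u1) * (L - v1)" "d\<^sup>2 = (u2 - L) * (v2 - L)" "e\<^sup>2 = u2 * v2"
    by (simp_all add: a_def b_def d_def e_def)
  have "b * ((u2 - L) + (v2 - L)) \<le> d * ((L - u1) + (L - v1))"
    unfolding b_def d_def using assms(2-3,5-7) by (rule beyond_diagonal_sqrt_mult_le)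
  moreover have "L\<^sup>2 * (b + d) + b * d * (b + d) - d * a\<^sup>2 - b * e\<^sup>2
      = L * (d * ((L - u1) + (L - v1)) - b * ((u2 - L) + (v2 - L)))"
  proof -
    have "b * d * (b + d) = d * b\<^sup>2 + b * d\<^sup>2" by (simp add: power2_eq_square algebra_simps)
    thus ?thesis unfolding sq by (simp add: power2_eq_square algebra_simps)
  qed
  ultimately have "0 \<le> (b + d) * (L\<^sup>2 * (b + d) + b * d * (b + d) - d * a\<^sup>2 - b * e\<^sup>2)"
    using \<open>0 < L\<close> nonneg by simp
  hence "(b + d) * (d * a\<^sup>2 + b * e\<^sup>2) - b * d * (b + d)\<^sup>2 \<le> (L * (b + d))\<^sup>2"
    by (simp add: power2_eq_square algebra_simps)
  moreover have "(a * d + e * b)\<^sup>2 \<le> (b + d) * (d * a\<^sup>2 + b * e\<^sup>2) - b * d * (b + d)\<^sup>2"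
  proof -
    have "(b + d)\<^sup>2 \<le> (e - a)\<^sup>2"
      using long nonneg unfolding a_def b_def d_def e_def by (intro power_mono) auto
    hence "0 \<le> b * d * ((e - a)\<^sup>2 - (b + d)\<^sup>2)" using nonneg by simp
    thus ?thesis by (simp add: power2_eq_square algebra_simps)
  qed
  ultimately have "(a * d + e * b)\<^sup>2 \<le> (L * (b + d))\<^sup>2" by linarith
  hence "a * d + e * b \<le> L * (b + d)"
    by (rule power2_le_imp_le) (use \<open>0 < L\<close> nonneg in simp)
  thus ?thesis by (simp add: a_def b_def d_def e_def)
qed

lemma ptolemy_null_coords_comparison:
  fixes u1 v1 u2 v2 L T :: real
  assumes uv: "0 \<le> v1" "v1 \<le> u1" "u1 \<le> L" "0 < L" "L \<le> u2" "u2 \<le> v2"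
    and diag: "\<And>s. u1 \<le> s \<Longrightarrow> s \<le> L \<Longrightarrow> sqrt ((s - u1) * (s - v1)) + sqrt ((u2 - s) * (v2 - s)) \<le> T"
    and long: "sqrt (u1 * v1) + T \<le> sqrt (u2 * v2)"
  shows "sqrt (u1 * v1) * sqrt ((u2 - L) * (v2 - L)) + sqrt (u2 * v2) * sqrt ((L - u1) * (L - v1)) \<le> L * T"
proof (cases "(L - u1) * (v2 - L) \<le> (L - v1) * (u2 - L)")
  case True
  have vertex: "sqrt ((L - u1) * (L - v1)) + sqrt ((u2 - L) * (v2 - L)) \<le> T"
    using diag[of L] uv by simp
  have "sqrt (u1 * v1) * sqrt ((u2 - L) * (v2 - L)) + sqrt (u2 * v2) * sqrt ((L - u1) * (L - v1))
      \<le> L * (sqrt ((L - u1) * (L - v1)) + sqrt ((u2 - L) * (v2 - L)))"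
    by (rule ptolemy_null_coords_beyond_diagonal[OF uv True]) (use vertex long in linarith)
  also have "\<dots> \<le> L * T" using vertex uv by simp
  finally show ?thesis .
next
  case False
  obtain s where "u1 \<le> s" "s \<le> L"
    and "sqrt ((s - u1) * (s - v1)) + sqrt ((u2 - s) * (v2 - s)) = sqrt ((u2 - u1) * (v2 - v1))"
    using segment_meets_diagonal[of v1 u1 L u2 v2] uv False by auto
  hence crossing: "sqrt ((u2 - u1) * (v2 - v1)) \<le> T" using diag by metis
  have "sqrt (u1 * v1) * sqrt ((u2 - L) * (v2 - L)) + sqrt (u2 * v2) * sqrt ((L - u1) * (L - v1))
      \<le> L * sqrt ((u2 - u1) * (v2 - v1))"
    using uv by (intro mink_ptolemy_null_coords) auto
  also have "\<dots> \<le> L * T" using crossing uv by simp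
  finally show ?thesis .
qed

section \<open>Lorentzian pre-length spaces\<close>

locale finite_lorentzian_pre_length_space =
  fixes le ll :: "'a::metric_space \<Rightarrow> 'a \<Rightarrow> bool" and lt :: "'a \<Rightarrow> 'a \<Rightarrow> ennreal"
  assumes pre_length: "lorentzian_pre_length_space le ll lt"
    and lt_finite: "lt x y \<noteq> \<infinity>"
begin

definition tau :: "'a \<Rightarrow> 'a \<Rightarrow> real" where
  "tau x y = enn2real (lt x y)"

lemma lt_eq_tau: "lt x y = ennreal (tau x y)"
  using lt_finite[of x y] by (simp add: tau_def ennreal_enn2real_if)

lemma tau_nonneg: "0 \<le> tau x y"
  by (simp add: tau_def)

lemma causal_refl: "le x x"
  using pre_length by (simp add: lorentzian_pre_length_space_def)

lemma causal_trans: "le x y \<Longrightarrow> le y z \<Longrightarrow> le x z"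
  using pre_length unfolding lorentzian_pre_length_space_def by blast

lemma timelike_trans: "ll x y \<Longrightarrow> ll y z \<Longrightarrow> ll x z"
  using pre_length unfolding lorentzian_pre_length_space_def by blast

lemma timelike_imp_causal: "ll x y \<Longrightarrow> le x y"
  using pre_length unfolding lorentzian_pre_length_space_def by blast

lemma timelike_iff_tau_pos: "ll x y \<longleftrightarrow> 0 < tau x y"
proof -
  have "0 < lt x y \<longleftrightarrow> ll x y"
    using pre_length unfolding lorentzian_pre_length_space_def by blast
  thus ?thesis by (simp add: lt_eq_tau)
qed

lemma tau_reverse_triangle:
  assumes "le x y" "le y z"
  shows "tau x y + tau y z \<le> tau x z"
proof -
  have "lt x y + lt y z \<le> lt x z"
    using pre_length assms unfolding lorentzian_pre_length_space_def by blast
  thus ?thesis by (simp add: lt_eq_tau tau_nonneg flip: ennreal_plus)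
qed

lemma tau_self [simp]: "tau x x = 0"
  using tau_reverse_triangle[OF causal_refl causal_refl, of x] tau_nonneg[of x x] by simp

lemma max_geodesic_endpoints:
  assumes "max_geodesic le lt g x y"
  shows "g 0 = x" "g 1 = y"
  using assms by (simp_all add: max_geodesic_def)

lemma max_geodesic_causal:
  assumes "max_geodesic le lt g x y" "0 \<le> s" "s \<le> t" "t \<le> 1"
  shows "le (g s) (g t)"
  using assms unfolding max_geodesic_def by blast

lemma max_geodesic_image_causal:
  assumes g: "max_geodesic le lt g x y" and "p \<in> g ` {0..1}"
  shows "le x p" "le p y"
  using assms max_geodesic_causal[OF g] max_geodesic_endpoints[OF g] by force+

lemma max_geodesic_tau_add:
  assumes "max_geodesic le lt g x y" "0 \<le> s" "s \<le> t" "t \<le> u" "u \<le> 1"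
  shows "tau (g s) (g u) = tau (g s) (g t) + tau (g t) (g u)"
proof -
  have "lt (g s) (g u) = lt (g s) (g t) + lt (g t) (g u)"
    using assms unfolding max_geodesic_def by blast
  thus ?thesis by (simp add: lt_eq_tau tau_nonneg flip: ennreal_plus)
qed

lemma max_geodesic_tau_split:
  assumes g: "max_geodesic le lt g x y" and "0 \<le> t" "t \<le> 1"
  shows "tau x (g t) + tau (g t) y = tau x y"
  using max_geodesic_tau_add[OF g, of 0 t 1] assms max_geodesic_endpoints[OF g] by simp

lemma corr_point_intro:
  assumes "p \<in> g ` {0..1}" "pb \<in> closed_segment ab bb"
    and "mink_tau ab pb = tau a p" "mink_tau pb bb = tau p b"
  shows "corr_point lt a b g ab bb p pb"
  using assms by (simp add: corr_point_def lt_eq_tau)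

lemma corr_point_endpoint:
  assumes g: "max_geodesic le lt g a b" and "mink_tau ab bb = tau a b"
  shows "corr_point lt a b g ab bb b bb"
proof (rule corr_point_intro)
  show "b \<in> g ` {0..1}" using max_geodesic_endpoints(2)[OF g] by force
qed (use assms in \<open>simp_all add: mink_tau_self\<close>)

end

section \<open>Timelike curvature bounded above by 0\<close>

locale lorentzian_curv_bounded_above_0 =
  fixes le ll :: "'a::metric_space \<Rightarrow> 'a \<Rightarrow> bool" and lt :: "'a \<Rightarrow> 'a \<Rightarrow> ennreal"
  assumes lorentzian: "lorentzian_pre_length_space le ll lt"
    and curv_bounded: "tl_curv_bounded_above_0 le ll lt"

sublocale lorentzian_curv_bounded_above_0 \<subseteq> finite_lorentzian_pre_length_space
  using lorentzian curv_bounded by unfold_locales (simp_all add: tl_curv_bounded_above_0_def)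

context lorentzian_curv_bounded_above_0
begin

lemma tau_continuous: "continuous_on UNIV (\<lambda>q. tau (fst q) (snd q))"
  unfolding continuous_on_def
proof
  fix q :: "'a \<times> 'a"
  have "continuous_on UNIV (\<lambda>q. lt (fst q) (snd q))"
    using curv_bounded by (simp add: tl_curv_bounded_above_0_def)
  hence "((\<lambda>q. lt (fst q) (snd q)) \<longlongrightarrow> lt (fst q) (snd q)) (at q within UNIV)"
    unfolding continuous_on_def by blast
  hence "((\<lambda>q. lt (fst q) (snd q)) \<longlongrightarrow> ennreal (tau (fst q) (snd q))) (at q within UNIV)"
    by (simp only: lt_eq_tau[of "fst q" "snd q"])
  thus "((\<lambda>q. tau (fst q) (snd q)) \<longlongrightarrow> tau (fst q) (snd q)) (at q within UNIV)"
    unfolding tau_def by (rule tendsto_enn2real) simp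
qed

lemma timelike_geodesic_exists: "ll x y \<Longrightarrow> \<exists>g. max_geodesic le lt g x y"
  using curv_bounded by (simp add: tl_curv_bounded_above_0_def)

lemma max_geodesic_ivt:
  assumes g: "max_geodesic le lt g x y" and "0 \<le> t" "t \<le> 1" "0 \<le> c" "c \<le> tau x (g t)"
  shows "\<exists>s. 0 \<le> s \<and> s \<le> t \<and> tau x (g s) = c"
proof (rule IVT')
  have "continuous_on {0..t} g"
    using g assms(2,3) by (auto simp: max_geodesic_def elim: continuous_on_subset)
  hence "continuous_on {0..t} (\<lambda>s. (x, g s))" by (intro continuous_intros)
  from continuous_on_compose2[OF tau_continuous this]
  show "continuous_on {0..t} (\<lambda>s. tau x (g s))" by simp
qed (use assms max_geodesic_endpoints[OF g] in auto)

lemma triangle_comparison: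
  assumes tri: "timelike_triangle le ll lt x y z \<alpha> \<beta> \<gamma>"
    and sides: "mink_tau xb yb = tau x y" "mink_tau yb zb = tau y z" "mink_tau xb zb = tau x z"
    and p: "corr_point lt x y \<alpha> xb yb p pb \<or> corr_point lt y z \<beta> yb zb p pb \<or> corr_point lt x z \<gamma> xb zb p pb"
    and q: "corr_point lt x y \<alpha> xb yb q qb \<or> corr_point lt y z \<beta> yb zb q qb \<or> corr_point lt x z \<gamma> xb zb q qb"
  shows "mink_tau pb qb \<le> tau p q"
proof -
  define S where "S = {(p, pb). corr_point lt x y \<alpha> xb yb p pb \<or> corr_point lt y z \<beta> yb zb p pb \<or>
                               corr_point lt x z \<gamma> xb zb p pb}"
  have "ennreal (mink_tau xb yb) = lt x y" "ennreal (mink_tau yb zb) = lt y z"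
    "ennreal (mink_tau xb zb) = lt x z"
    using sides by (simp_all add: lt_eq_tau)
  from curv_bounded[unfolded tl_curv_bounded_above_0_def, THEN conjunct2, THEN conjunct2,
      THEN conjunct2, rule_format, OF tri this]
  have "\<forall>(p, pb)\<in>S. \<forall>(q, qb)\<in>S. ennreal (mink_tau pb qb) \<le> lt p q"
    by (simp add: S_def Let_def)
  moreover have "(p, pb) \<in> S" "(q, qb) \<in> S" using p q by (simp_all add: S_def)
  ultimately have "ennreal (mink_tau pb qb) \<le> lt p q" by blast
  thus ?thesis by (simp add: lt_eq_tau tau_nonneg)
qed

lemma comparison_across_common_side:
  assumes tri1: "timelike_triangle le ll lt x y z \<alpha> \<beta> \<gamma>"
    and tri2: "timelike_triangle le ll lt x z w \<gamma> \<delta> \<epsilon>"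
    and sides1: "mink_tau xb yb = tau x y" "mink_tau yb zb = tau y z" "mink_tau xb zb = tau x z"
    and sides2: "mink_tau zb wb = tau z w" "mink_tau xb wb = tau x w"
    and p: "corr_point lt x z \<gamma> xb zb p pb"
    and pos: "0 < mink_tau yb pb"
  shows "mink_tau yb pb + mink_tau pb wb \<le> tau y w"
proof -
  have "corr_point lt x y \<alpha> xb yb y yb"
    using tri1 sides1(1) by (auto simp: timelike_triangle_def intro: corr_point_endpoint)
  hence yp: "mink_tau yb pb \<le> tau y p"
    using triangle_comparison[OF tri1 sides1] p by blast
  have "corr_point lt z w \<delta> zb wb w wb"
    using tri2 sides2(1) by (auto simp: timelike_triangle_def intro: corr_point_endpoint)
  hence pw: "mink_tau pb wb \<le> tau p w"
    using triangle_comparison[OF tri2 sides1(3) sides2] p by blast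
  have "le y p" using yp pos by (simp add: timelike_imp_causal timelike_iff_tau_pos)
  moreover have "le p w"
  proof -
    have "le p z"
      using tri1 p by (auto simp: timelike_triangle_def corr_point_def intro: max_geodesic_image_causal)
    thus ?thesis using tri2 by (auto simp: timelike_triangle_def intro: causal_trans timelike_imp_causal)
  qed
  ultimately have "tau y p + tau p w \<le> tau y w" by (rule tau_reverse_triangle)
  with yp pw show ?thesis by linarith
qed

lemma exists_corr_point_on_diagonal:
  assumes \<gamma>: "max_geodesic le lt \<gamma> x z" and "0 \<le> s" "s \<le> tau x z"
  shows "\<exists>p. corr_point lt x z \<gamma> (from_null_coords 0 0) (from_null_coords (tau x z) (tau x z)) p
               (from_null_coords s s)"
proof -
  obtain t where t: "0 \<le> t" "t \<le> 1" "tau x (\<gamma> t) = s"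
    using max_geodesic_ivt[OF \<gamma>, of 1 s] assms max_geodesic_endpoints[OF \<gamma>] by auto
  have "corr_point lt x z \<gamma> (from_null_coords 0 0) (from_null_coords (tau x z) (tau x z)) (\<gamma> t)
          (from_null_coords s s)"
  proof (rule corr_point_intro)
    show "\<gamma> t \<in> \<gamma> ` {0..1}" using t by simp
    show "from_null_coords s s \<in> closed_segment (from_null_coords 0 0) (from_null_coords (tau x z) (tau x z))"
      using assms by (intro from_null_coords_diagonal_in_segment)
    show "mink_tau (from_null_coords 0 0) (from_null_coords s s) = tau x (\<gamma> t)"
      using t assms by (simp add: mink_tau_from_null_coords)
    show "mink_tau (from_null_coords s s) (from_null_coords (tau x z) (tau x z)) = tau (\<gamma> t) z"
      using t assms max_geodesic_tau_split[OF \<gamma> t(1,2)] by (simp add: mink_tau_from_null_coords)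
  qed
  thus ?thesis by blast
qed

lemma comparison_bound_on_diagonal:
  assumes tri1: "timelike_triangle le ll lt x y z \<alpha> \<beta> \<gamma>"
    and tri2: "timelike_triangle le ll lt x z w \<gamma> \<delta> \<epsilon>"
    and uv: "0 \<le> v1" "v1 \<le> u1" "u1 < tau x z" "tau x z \<le> u2" "u2 \<le> v2"
    and sides1: "mink_tau (from_null_coords 0 0) (from_null_coords u1 v1) = tau x y"
      "mink_tau (from_null_coords u1 v1) (from_null_coords (tau x z) (tau x z)) = tau y z"
    and sides2: "mink_tau (from_null_coords (tau x z) (tau x z)) (from_null_coords u2 v2) = tau z w"
      "mink_tau (from_null_coords 0 0) (from_null_coords u2 v2) = tau x w"
    and s: "u1 \<le> s" "s \<le> tau x z"
  shows "sqrt ((s - u1) * (s - v1)) + sqrt ((u2 - s) * (v2 - s)) \<le> tau y w"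
proof -
  define F where "F s = sqrt ((s - u1) * (s - v1)) + sqrt ((u2 - s) * (v2 - s))" for s
  have side_xz: "mink_tau (from_null_coords 0 0) (from_null_coords (tau x z) (tau x z)) = tau x z"
    by (simp add: mink_tau_from_null_coords tau_nonneg)
  have \<gamma>: "max_geodesic le lt \<gamma> x z" using tri1 by (simp add: timelike_triangle_def)
  have "F s \<le> tau y w" if s: "s \<in> {u1<..tau x z}" for s
  proof -
    obtain p where p: "corr_point lt x z \<gamma> (from_null_coords 0 0) (from_null_coords (tau x z) (tau x z))
                         p (from_null_coords s s)"
      using exists_corr_point_on_diagonal[OF \<gamma>, of s] s uv by auto
    have "mink_tau (from_null_coords u1 v1) (from_null_coords s s) = sqrt ((s - u1) * (s - v1))"
      "mink_tau (from_null_coords s s) (from_null_coords u2 v2) = sqrt ((u2 - s) * (v2 - s))"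
      using s uv by (simp_all add: mink_tau_from_null_coords)
    moreover have "0 < sqrt ((s - u1) * (s - v1))" using s uv by simp
    ultimately show ?thesis
      using comparison_across_common_side[OF tri1 tri2 sides1 side_xz sides2 p] by (simp add: F_def)
  qed
  moreover have "continuous_on {u1..tau x z} F" unfolding F_def by (intro continuous_intros)
  ultimately show ?thesis
    using continuous_le_on_closure[of "{u1<..tau x z}" F s] s uv by (simp add: F_def)
qed

lemma ptolemy_timelike:
  assumes xy: "ll x y" and yz: "ll y z" and zw: "ll z w"
  shows "tau x y * tau z w + tau x w * tau y z \<le> tau x z * tau y w"
proof -
  have xz: "ll x z" and xw: "ll x w" using xy yz zw by (blast intro: timelike_trans)+
  obtain \<alpha> \<beta> \<gamma> \<delta> \<epsilon> where "max_geodesic le lt \<alpha> x y" "max_geodesic le lt \<beta> y z"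
    "max_geodesic le lt \<gamma> x z" "max_geodesic le lt \<delta> z w" "max_geodesic le lt \<epsilon> x w"
    using timelike_geodesic_exists[OF xy] timelike_geodesic_exists[OF yz] timelike_geodesic_exists[OF xz]
      timelike_geodesic_exists[OF zw] timelike_geodesic_exists[OF xw] by blast
  hence tri1: "timelike_triangle le ll lt x y z \<alpha> \<beta> \<gamma>" and tri2: "timelike_triangle le ll lt x z w \<gamma> \<delta> \<epsilon>"
    using xy yz xz zw by (simp_all add: timelike_triangle_def)
  have pos: "0 < tau x y" "0 < tau y z" "0 < tau z w"
    using xy yz zw by (simp_all add: timelike_iff_tau_pos)
  have causal: "le x y" "le y z" "le z w" "le x z" "le y w"
    using xy yz zw xz timelike_trans[OF yz zw] by (simp_all add: timelike_imp_causal)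
  have xyz: "tau x y + tau y z \<le> tau x z" and xzw: "tau x z + tau z w \<le> tau x w"
    and xyw: "tau x y + tau y w \<le> tau x w"
    using tau_reverse_triangle causal by blast+
  hence "0 < tau x z" using pos by simp
  obtain u1 v1 where uv1: "0 \<le> v1" "v1 \<le> u1" "u1 < tau x z" "u1 * v1 = (tau x y)\<^sup>2"
      "(tau x z - u1) * (tau x z - v1) = (tau y z)\<^sup>2"
    using comparison_vertex_between[OF pos(1,2) xyz] by blast
  obtain u2 v2 where uv2: "tau x z \<le> u2" "u2 \<le> v2" "u2 * v2 = (tau x w)\<^sup>2"
      "(u2 - tau x z) * (v2 - tau x z) = (tau z w)\<^sup>2"
    using comparison_vertex_beyond[OF pos(3) \<open>0 < tau x z\<close> xzw] by blast
  have sqrts: "sqrt (u1 * v1) = tau x y" "sqrt ((tau x z - u1) * (tau x z - v1)) = tau y z"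
      "sqrt (u2 * v2) = tau x w" "sqrt ((u2 - tau x z) * (v2 - tau x z)) = tau z w"
    using uv1 uv2 by (simp_all add: tau_nonneg)
  have "sqrt ((s - u1) * (s - v1)) + sqrt ((u2 - s) * (v2 - s)) \<le> tau y w"
    if "u1 \<le> s" "s \<le> tau x z" for s
    using comparison_bound_on_diagonal[OF tri1 tri2 uv1(1-3) uv2(1,2) _ _ _ _ that] uv1 uv2 sqrts
    by (simp add: mink_tau_from_null_coords)
  from ptolemy_null_coords_comparison[OF uv1(1,2) less_imp_le[OF uv1(3)] \<open>0 < tau x z\<close> uv2(1,2) this] xyw
  show ?thesis by (simp add: sqrts mult.commute)
qed

lemma geodesic_inner_points:
  assumes "ll y z" "0 < e" "2 * e < tau y z"
  shows "\<exists>p q. le y p \<and> le p q \<and> le q z \<and> tau y p = e \<and> tau p q = tau y z - 2 * e \<and> tau q z = e"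
proof -
  obtain g where g: "max_geodesic le lt g y z" using timelike_geodesic_exists assms(1) by blast
  note ends = max_geodesic_endpoints[OF g]
  obtain t2 where t2: "0 \<le> t2" "t2 \<le> 1" "tau y (g t2) = tau y z - e"
    using max_geodesic_ivt[OF g, of 1 "tau y z - e"] assms ends by auto
  obtain t1 where t1: "0 \<le> t1" "t1 \<le> t2" "tau y (g t1) = e"
    using max_geodesic_ivt[OF g t2(1,2), of e] assms t2 by auto
  have "tau (g t1) (g t2) = tau y z - 2 * e"
    using max_geodesic_tau_add[OF g, of 0 t1 t2] t1 t2 ends by simp
  moreover have "tau (g t2) z = e"
    using max_geodesic_tau_split[OF g t2(1,2)] t2 by simp
  moreover have "le y (g t1)" "le (g t1) (g t2)" "le (g t2) z"
    using max_geodesic_causal[OF g, of 0 t1] max_geodesic_causal[OF g, of t1 t2]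
      max_geodesic_causal[OF g, of t2 1] t1 t2 ends by simp_all
  ultimately show ?thesis using t1 by blast
qed

lemma ptolemy_causal_perturbed:
  assumes xy: "le x y" and yz: "ll y z" and zw: "le z w" and e: "0 < e" "2 * e < tau y z"
  shows "tau x y * tau z w + tau x w * tau y z \<le> tau x z * tau y w + 2 * tau x w * e"
proof -
  obtain p q where pq: "le y p" "le p q" "le q z" "tau y p = e" "tau p q = tau y z - 2 * e" "tau q z = e"
    using geodesic_inner_points[OF yz e] by blast
  have xp: "tau x y + tau y p \<le> tau x p" using tau_reverse_triangle xy pq by blast
  have qw: "tau q z + tau z w \<le> tau q w" using tau_reverse_triangle zw pq by blast
  have "le x q" using causal_trans[OF xy causal_trans[OF pq(1,2)]] .
  hence xq: "tau x q \<le> tau x z" using tau_reverse_triangle[OF _ pq(3)] tau_nonneg[of q z] by force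
  have "le p w" using causal_trans[OF pq(2) causal_trans[OF pq(3) zw]] .
  hence pw: "tau p w \<le> tau y w" using tau_reverse_triangle[OF pq(1)] tau_nonneg[of y p] by force
  have "ll x p" "ll p q" "ll q w"
    using xp pq qw e tau_nonneg[of x y] tau_nonneg[of z w] by (auto simp: timelike_iff_tau_pos)
  hence "tau x p * tau q w + tau x w * tau p q \<le> tau x q * tau p w"
    by (rule ptolemy_timelike)
  moreover have "tau x y * tau z w \<le> tau x p * tau q w"
    using xp qw pq e by (intro mult_mono) (auto simp: tau_nonneg)
  moreover have "tau x q * tau p w \<le> tau x z * tau y w"
    using xq pw by (intro mult_mono) (auto simp: tau_nonneg)
  ultimately show ?thesis using pq by (simp add: algebra_simps)
qed

lemma ptolemy_causal:
  assumes xy: "le x y" and yz: "le y z" and zw: "le z w"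
  shows "tau x y * tau z w + tau x w * tau y z \<le> tau x z * tau y w"
proof (cases "ll y z")
  case False
  hence "tau y z = 0" using timelike_iff_tau_pos tau_nonneg by (simp add: order_less_le)
  moreover have "tau x y \<le> tau x z" "tau z w \<le> tau y w"
    using tau_reverse_triangle[OF xy yz] tau_reverse_triangle[OF yz zw] calculation by simp_all
  ultimately show ?thesis by (simp add: mult_mono tau_nonneg)
next
  case True
  hence "0 < tau y z / 2" by (simp add: timelike_iff_tau_pos)
  thus ?thesis
    by (rule real_le_linear_epsilon[where K = "2 * tau x w"])
      (use ptolemy_causal_perturbed[OF xy True zw] in auto)
qed

end

theorem proposition4p1:
  fixes le ll :: "'a::metric_space \<Rightarrow> 'a \<Rightarrow> bool" and lt :: "'a \<Rightarrow> 'a \<Rightarrow> ennreal"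
  assumes "lorentzian_pre_length_space le ll lt"
    and "tl_curv_bounded_above_0 le ll lt"
  shows "\<forall>x y z w. le x y \<longrightarrow> le y z \<longrightarrow> le z w \<longrightarrow>
           lt x y * lt z w + lt x w * lt y z \<le> lt x z * lt y w"
proof (intro allI impI)
  fix x y z w assume "le x y" "le y z" "le z w"
  interpret lorentzian_curv_bounded_above_0 le ll lt by unfold_locales fact+
  have "ennreal (tau x y * tau z w + tau x w * tau y z) \<le> ennreal (tau x z * tau y w)"
    using ptolemy_causal[OF \<open>le x y\<close> \<open>le y z\<close> \<open>le z w\<close>] by (rule ennreal_leI)
  thus "lt x y * lt z w + lt x w * lt y z \<le> lt x z * lt y w"
    by (simp add: lt_eq_tau tau_nonneg ennreal_mult ennreal_plus)
qed

end
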